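(* For every prime $p$ and every integer $\tau$ there exists $\alpha^\tau_p\in\mathbb Z[z^2]$, $z=q-q^{-1}$, such that $$\sum_{j=0}^{p-1}(q^{p\tau})^{p-1-2j}-p\,(-1)^{(p-1)\tau}=[p]^2\,\alpha^\tau_p,\qquad [p]=\frac{q^p-q^{-p}}{q-q^{-1}}.$$ *)

theory Defs
  imports Complex_Main "HOL-Computational_Algebra.Polynomial" "HOL-Computational_Algebra.Primes"
begin

definition qint :: "int \<Rightarrow> real \<Rightarrow> real" where
  "qint n q = (q powi n - q powi (-n)) / (q - inverse q)"

end

theory Submission imports Defs begin

(* Write z = q - q^-1. For x y = 1 the power sums x^n + y^n are integer polynomials in
   (x - y)^2, namely shifted Dickson polynomials; as these take the value 2 at 0, also
   (x^n - y^n)^2 = (x - y)^2 beta_n((x - y)^2), so [n]^2 = beta_n(z^2). For odd p = 2n + 1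
   the left-hand side equals the sum of (x^k - x^-k)^2 over 1 <= k <= n with x = q^(p tau);
   applying the identity first to q^p and then to q writes each summand as [p]^2 times an
   integer polynomial in z^2. For p = 2 the left-hand side is (q^tau -+ q^-tau)^2: the even
   case is the same, and in the odd case the Dickson polynomial plus 2 vanishes at z^2 = -4,
   which yields the factor z^2 + 4 = [2]^2. *)

lemma map_poly_of_int_add:
  "map_poly of_int (p + q) = (map_poly of_int p + map_poly of_int q :: 'a::comm_ring_1 poly)"
  by (rule poly_eqI) (simp add: coeff_map_poly)

lemma map_poly_of_int_diff:
  "map_poly of_int (p - q) = (map_poly of_int p - map_poly of_int q :: 'a::comm_ring_1 poly)"
  by (rule poly_eqI) (simp add: coeff_map_poly)

lemma map_poly_of_int_smult:
  "map_poly of_int (smult a p) = (smult (of_int a) (map_poly of_int p) :: 'a::comm_ring_1 poly)"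
  by (rule poly_eqI) (simp add: coeff_map_poly)

lemma map_poly_of_int_mult:
  "map_poly of_int (p * q) = (map_poly of_int p * map_poly of_int q :: 'a::comm_ring_1 poly)"
  by (induction p) (simp_all add: map_poly_pCons map_poly_of_int_add map_poly_of_int_smult)

lemma map_poly_of_int_pcompose:
  "map_poly of_int (pcompose p q)
    = (pcompose (map_poly of_int p) (map_poly of_int q) :: 'a::comm_ring_1 poly)"
  by (induction p) (simp_all add: pcompose_pCons map_poly_pCons map_poly_of_int_add map_poly_of_int_mult)

lemma map_poly_of_int_sum:
  "map_poly of_int (sum f A) = (\<Sum>k\<in>A. map_poly of_int (f k) :: 'a::comm_ring_1 poly)"
  by (induction A rule: infinite_finite_induct) (simp_all add: map_poly_of_int_add)

(* The Dickson polynomial D_n(X + 2, 1), in the variable z^2 instead of q^2 + q^-2. *)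
fun dickson :: "nat \<Rightarrow> int poly" where
  "dickson 0 = [:2:]"
| "dickson (Suc 0) = [:2, 1:]"
| "dickson (Suc (Suc n)) = [:2, 1:] * dickson (Suc n) - dickson n"

lemma poly_dickson:
  fixes a b :: "'a::comm_ring_1"
  assumes "a * b = 1"
  shows "poly (map_poly of_int (dickson n)) (a + b - 2) = a ^ n + b ^ n"
proof (induction n rule: dickson.induct)
  case (3 n)
  have "a ^ Suc (Suc n) + b ^ Suc (Suc n) = (a + b) * (a ^ Suc n + b ^ Suc n) - a * b * (a ^ n + b ^ n)"
    by (simp add: algebra_simps)
  with 3 show ?case
    by (simp only: dickson.simps map_poly_of_int_diff map_poly_of_int_mult poly_diff poly_mult)
      (simp add: map_poly_pCons assms)
qed (simp_all add: map_poly_pCons)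

lemma poly_dickson_diff_sq:
  fixes x y :: "'a::comm_ring_1"
  assumes "x * y = 1"
  shows "poly (map_poly of_int (dickson n)) ((x - y)\<^sup>2) = (x ^ n)\<^sup>2 + (y ^ n)\<^sup>2"
proof -
  have "(x - y)\<^sup>2 = x\<^sup>2 + y\<^sup>2 - 2" and "x\<^sup>2 * y\<^sup>2 = 1"
    using assms by (simp_all add: power2_diff mult.assoc flip: power_mult_distrib)
  then show ?thesis
    using poly_dickson[of "x\<^sup>2" "y\<^sup>2" n]
    by (simp flip: power_mult power_even_eq add: mult.commute[of n 2])
qed

lemma poly_dickson_0: "poly (dickson n) 0 = 2"
  by (induction n rule: dickson.induct) simp_all

lemma poly_dickson_neg4: "poly (dickson n) (-4) = 2 * (-1) ^ n"
  by (induction n rule: dickson.induct) simp_all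

definition qint_sq_poly :: "nat \<Rightarrow> int poly" where
  "qint_sq_poly n = synthetic_div (dickson n) 0"

lemma dickson_eq_qint_sq_poly: "dickson n = [:0, 1:] * qint_sq_poly n + [:2:]"
  using synthetic_div_correct'[of 0 "dickson n"] by (simp add: qint_sq_poly_def poly_dickson_0)

lemma power_diff_sq_eq_qint_sq_poly:
  fixes x y :: "'a::comm_ring_1"
  assumes "x * y = 1"
  shows "(x ^ n - y ^ n)\<^sup>2 = (x - y)\<^sup>2 * poly (map_poly of_int (qint_sq_poly n)) ((x - y)\<^sup>2)"
proof -
  have "(x ^ n - y ^ n)\<^sup>2 = (x ^ n)\<^sup>2 + (y ^ n)\<^sup>2 - 2"
    using assms by (simp add: power2_diff mult.assoc flip: power_mult_distrib)
  also have "\<dots> = poly (map_poly of_int (dickson n)) ((x - y)\<^sup>2) - 2"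
    using poly_dickson_diff_sq[OF assms] by simp
  also have "\<dots> = (x - y)\<^sup>2 * poly (map_poly of_int (qint_sq_poly n)) ((x - y)\<^sup>2)"
    by (simp add: dickson_eq_qint_sq_poly map_poly_pCons map_poly_of_int_add map_poly_of_int_mult)
  finally show ?thesis .
qed

lemma power_mult_diff_sq_eq:
  fixes x y :: "'a::comm_ring_1"
  assumes "x * y = 1"
  shows "(x ^ (p * k) - y ^ (p * k))\<^sup>2
    = poly (map_poly of_int (qint_sq_poly p)) ((x - y)\<^sup>2)
      * poly (map_poly of_int ([:0, 1:] * pcompose (qint_sq_poly k) ([:0, 1:] * qint_sq_poly p)))
          ((x - y)\<^sup>2)"
proof -
  have "x ^ p * y ^ p = 1"
    using assms by (simp flip: power_mult_distrib)
  then have "(x ^ (p * k) - y ^ (p * k))\<^sup>2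
      = (x ^ p - y ^ p)\<^sup>2 * poly (map_poly of_int (qint_sq_poly k)) ((x ^ p - y ^ p)\<^sup>2)"
    unfolding power_mult by (rule power_diff_sq_eq_qint_sq_poly)
  with power_diff_sq_eq_qint_sq_poly[OF assms, of p] show ?thesis
    by (simp add: map_poly_pCons map_poly_of_int_mult map_poly_of_int_pcompose poly_pcompose)
qed

lemma power_add_sq_eq_odd:
  assumes "odd n"
  shows "\<exists>\<delta> :: int poly. \<forall>x y :: 'a::comm_ring_1. x * y = 1 \<longrightarrow>
    (x ^ n + y ^ n)\<^sup>2 = ((x - y)\<^sup>2 + 4) * poly (map_poly of_int \<delta>) ((x - y)\<^sup>2)"
proof (intro exI allI impI)
  define \<delta> where "\<delta> = synthetic_div (dickson n + [:2:]) (-4)"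
  have dickson_plus_2: "dickson n + [:2:] = [:4, 1:] * \<delta>"
    using synthetic_div_correct'[of "-4" "dickson n + [:2:]"] assms
    by (simp add: \<delta>_def poly_dickson_neg4)
  fix x y :: 'a
  assume "x * y = 1"
  then have "(x ^ n + y ^ n)\<^sup>2 = (x ^ n)\<^sup>2 + (y ^ n)\<^sup>2 + 2"
    by (simp add: power2_sum mult.assoc flip: power_mult_distrib)
  also have "\<dots> = poly (map_poly of_int (dickson n + [:2:])) ((x - y)\<^sup>2)"
    using poly_dickson_diff_sq[OF \<open>x * y = 1\<close>] by (simp add: map_poly_of_int_add map_poly_pCons)
  also have "\<dots> = ((x - y)\<^sup>2 + 4) * poly (map_poly of_int \<delta>) ((x - y)\<^sup>2)"
    unfolding dickson_plus_2 map_poly_of_int_mult poly_mult by (simp add: map_poly_pCons add.commute)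
  finally show "(x ^ n + y ^ n)\<^sup>2 = ((x - y)\<^sup>2 + 4) * poly (map_poly of_int \<delta>) ((x - y)\<^sup>2)" .
qed

lemma sum_even_powi_minus_eq_sum_sq:
  fixes x :: "'a::field"
  assumes "x \<noteq> 0"
  shows "(\<Sum>j<2 * n + 1. x powi (2 * int n - 2 * int j)) - of_nat (2 * n + 1)
    = (\<Sum>k\<in>{1..n}. (x ^ k - inverse x ^ k)\<^sup>2)"
proof (induction n)
  case (Suc n)
  have split: "(\<Sum>j<2 * Suc n + 1. x powi (2 * int (Suc n) - 2 * int j))
      = x ^ (2 * Suc n) + (\<Sum>j<2 * n + 1. x powi (2 * int n - 2 * int j)) + inverse x ^ (2 * Suc n)"
  proof -
    let ?f = "\<lambda>j. x powi (2 * int (Suc n) - 2 * int j)"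
    have "(\<Sum>j<Suc (Suc (2 * n + 1)). ?f j) = ?f 0 + (\<Sum>j<2 * n + 1. ?f (Suc j)) + ?f (2 * n + 2)"
      by (simp only: sum.lessThan_Suc_shift[of ?f "Suc (2 * n + 1)"] sum.lessThan_Suc[of _ "2 * n + 1"])
        simp
    moreover have "?f 0 = x ^ (2 * Suc n)"
      by (simp flip: power_int_of_nat)
    moreover have "?f (2 * n + 2) = inverse x ^ (2 * Suc n)"
    proof -
      have "2 * int (Suc n) - 2 * int (2 * n + 2) = - int (2 * Suc n)"
        by simp
      then show ?thesis
        by (simp only: power_int_minus power_int_of_nat power_inverse)
    qed
    ultimately show ?thesis
      by (simp add: algebra_simps)
  qed
  have square: "(x ^ k - inverse x ^ k)\<^sup>2 = x ^ (2 * k) + inverse x ^ (2 * k) - 2" for k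
  proof -
    have "x ^ k * inverse x ^ k = 1"
      using assms by (metis power_mult_distrib right_inverse power_one)
    then show ?thesis
      by (simp add: power2_diff mult.commute[of 2] power_mult)
  qed
  have "(\<Sum>j<2 * Suc n + 1. x powi (2 * int (Suc n) - 2 * int j)) - of_nat (2 * Suc n + 1)
      = ((\<Sum>j<2 * n + 1. x powi (2 * int n - 2 * int j)) - of_nat (2 * n + 1))
        + (x ^ (2 * Suc n) + inverse x ^ (2 * Suc n) - 2)"
    unfolding split by (simp add: algebra_simps)
  also have "\<dots> = (\<Sum>k\<in>{1..n}. (x ^ k - inverse x ^ k)\<^sup>2) + (x ^ Suc n - inverse x ^ Suc n)\<^sup>2"
    by (simp only: Suc.IH square)
  also have "\<dots> = (\<Sum>k\<in>{1..Suc n}. (x ^ k - inverse x ^ k)\<^sup>2)"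
    by (subst sum.nat_ivl_Suc') (simp_all add: add.commute)
  finally show ?case .
qed simp

lemma qint_sq_poly_2: "qint_sq_poly 2 = [:4, 1:]"
  by (simp add: qint_sq_poly_def numeral_2_eq_2)

lemma qint_sq_eq:
  fixes q :: real
  assumes "q \<noteq> 0" and "q\<^sup>2 \<noteq> 1"
  shows "(qint (int n) q)\<^sup>2 = poly (map_poly of_int (qint_sq_poly n)) ((q - inverse q)\<^sup>2)"
proof -
  have "q - inverse q \<noteq> 0"
  proof
    assume "q - inverse q = 0"
    then have "q * q = 1"
      using assms(1) by (metis eq_iff_diff_eq_0 right_inverse)
    with assms(2) show False
      by (simp add: power2_eq_square)
  qed
  moreover have "qint (int n) q = (q ^ n - inverse q ^ n) / (q - inverse q)"
    by (simp add: qint_def power_int_minus power_inverse)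
  moreover have "q * inverse q = 1"
    using assms(1) by simp
  ultimately show ?thesis
    using power_diff_sq_eq_qint_sq_poly[of q "inverse q" n] by (simp add: power_divide)
qed

lemma powi_abs_cases:
  fixes q :: "'a::field"
  obtains "q powi m = q ^ nat \<bar>m\<bar>" and "inverse (q powi m) = inverse q ^ nat \<bar>m\<bar>"
  | "q powi m = inverse q ^ nat \<bar>m\<bar>" and "inverse (q powi m) = q ^ nat \<bar>m\<bar>"
proof (cases "m \<ge> 0")
  case True
  then obtain k where "m = int k"
    using nonneg_eq_int by blast
  then show ?thesis
    using that(1) by (simp add: power_inverse)
next
  case False
  then obtain k where "m = - int k"
    using nonneg_eq_int[of "- m"] by (metis minus_minus neg_0_le_iff_le nle_le)
  then show ?thesis
    using that(2) by (simp add: power_int_minus power_inverse)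
qed

lemma powi_mult_diff_sq_eq:
  fixes q :: real
  assumes "q \<noteq> 0" and "q\<^sup>2 \<noteq> 1"
  shows "(q powi (int p * m) - inverse (q powi (int p * m)))\<^sup>2
    = (qint (int p) q)\<^sup>2 * poly (map_poly of_int
        ([:0, 1:] * pcompose (qint_sq_poly (nat \<bar>m\<bar>)) ([:0, 1:] * qint_sq_poly p))) ((q - inverse q)\<^sup>2)"
proof -
  have "nat \<bar>int p * m\<bar> = p * nat \<bar>m\<bar>"
    by (simp add: abs_mult nat_mult_distrib)
  then have "(q powi (int p * m) - inverse (q powi (int p * m)))\<^sup>2
      = (q ^ (p * nat \<bar>m\<bar>) - inverse q ^ (p * nat \<bar>m\<bar>))\<^sup>2"
    by (cases q "int p * m" rule: powi_abs_cases) (simp_all add: power2_commute)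
  then show ?thesis
    using power_mult_diff_sq_eq[of q "inverse q" p] qint_sq_eq[OF assms] assms(1) by simp
qed

lemma quantum_sum_divisible_odd:
  fixes p :: nat and \<tau> :: int
  assumes "odd p"
  shows "\<exists>\<alpha> :: int poly. \<forall>q :: real. q \<noteq> 0 \<and> q\<^sup>2 \<noteq> 1 \<longrightarrow>
    (\<Sum>j<p. (q powi (int p * \<tau>)) powi (int p - 1 - 2 * int j))
      - real p * (-1) powi ((int p - 1) * \<tau>)
    = (qint (int p) q)\<^sup>2 * poly (map_poly of_int \<alpha>) ((q - inverse q)\<^sup>2)"
proof -
  obtain n where p: "p = 2 * n + 1"
    using assms oddE by blast
  define \<alpha>\<^sub>k where "\<alpha>\<^sub>k k =
    [:0, 1:] * pcompose (qint_sq_poly (nat \<bar>\<tau> * int k\<bar>)) ([:0, 1:] * qint_sq_poly p)" for k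
  have "(\<Sum>j<p. (q powi (int p * \<tau>)) powi (int p - 1 - 2 * int j))
      - real p * (-1) powi ((int p - 1) * \<tau>)
    = (qint (int p) q)\<^sup>2 * poly (map_poly of_int (\<Sum>k\<in>{1..n}. \<alpha>\<^sub>k k)) ((q - inverse q)\<^sup>2)"
    if q: "q \<noteq> 0" "q\<^sup>2 \<noteq> 1" for q :: real
  proof -
    define x where "x = q powi (int p * \<tau>)"
    have summand: "(x ^ k - inverse x ^ k)\<^sup>2
        = (qint (int p) q)\<^sup>2 * poly (map_poly of_int (\<alpha>\<^sub>k k)) ((q - inverse q)\<^sup>2)" for k
    proof -
      have "x ^ k = q powi (int p * (\<tau> * int k))"
        by (simp add: x_def power_int_mult mult.assoc)
      then show ?thesis
        using powi_mult_diff_sq_eq[OF q, of p "\<tau> * int k"] by (simp add: \<alpha>\<^sub>k_def power_inverse)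
    qed
    have "(-1::real) powi ((int p - 1) * \<tau>) = 1"
      by (simp add: p)
    then have "(\<Sum>j<p. x powi (int p - 1 - 2 * int j)) - real p * (-1) powi ((int p - 1) * \<tau>)
        = (\<Sum>k\<in>{1..n}. (x ^ k - inverse x ^ k)\<^sup>2)"
      using sum_even_powi_minus_eq_sum_sq[of x n] q(1) by (simp add: p x_def)
    also have "\<dots> = (\<Sum>k\<in>{1..n}.
        (qint (int p) q)\<^sup>2 * poly (map_poly of_int (\<alpha>\<^sub>k k)) ((q - inverse q)\<^sup>2))"
      by (simp only: summand)
    finally show ?thesis
      by (simp add: x_def map_poly_of_int_sum poly_sum sum_distrib_left)
  qed
  then show ?thesis
    by blast
qed

lemma quantum_sum_divisible_two:
  fixes \<tau> :: int
  shows "\<exists>\<alpha> :: int poly. \<forall>q :: real. q \<noteq> 0 \<and> q\<^sup>2 \<noteq> 1 \<longrightarrow>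
    (\<Sum>j<2. (q powi (2 * \<tau>)) powi (1 - 2 * int j)) - 2 * (-1) powi \<tau>
    = (qint 2 q)\<^sup>2 * poly (map_poly of_int \<alpha>) ((q - inverse q)\<^sup>2)"
proof -
  have sum_eq: "(\<Sum>j<2. (q powi (2 * \<tau>)) powi (1 - 2 * int j))
      = (q powi \<tau>)\<^sup>2 + (inverse (q powi \<tau>))\<^sup>2" if "q \<noteq> 0" for q :: real
    using that by (simp add: numeral_2_eq_2 power_int_minus power_int_mult power_int_mult_distrib power2_eq_square)
  show ?thesis
  proof (cases "even \<tau>")
    case True
    then obtain s where s: "\<tau> = 2 * s" ..
    have "(\<Sum>j<2. (q powi (2 * \<tau>)) powi (1 - 2 * int j)) - 2 * (-1) powi \<tau>
        = (qint 2 q)\<^sup>2 * poly (map_poly of_int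
            ([:0, 1:] * pcompose (qint_sq_poly (nat \<bar>s\<bar>)) ([:0, 1:] * qint_sq_poly 2))) ((q - inverse q)\<^sup>2)"
      if q: "q \<noteq> 0" "q\<^sup>2 \<noteq> 1" for q :: real
    proof -
      have "(\<Sum>j<2. (q powi (2 * \<tau>)) powi (1 - 2 * int j)) - 2 * (-1) powi \<tau>
          = (q powi (2 * s) - inverse (q powi (2 * s)))\<^sup>2"
        using sum_eq[OF q(1)] True q(1) by (simp add: s power2_diff mult.assoc)
      then show ?thesis
        using powi_mult_diff_sq_eq[OF q, of 2 s] by simp
    qed
    then show ?thesis
      by blast
  next
    case False
    define K where "K = nat \<bar>\<tau>\<bar>"
    have "odd K"
      using False by (simp add: K_def even_nat_iff)
    then obtain \<delta> :: "int poly" where \<delta>: "\<And>x y :: real. x * y = 1 \<Longrightarrow>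
        (x ^ K + y ^ K)\<^sup>2 = ((x - y)\<^sup>2 + 4) * poly (map_poly of_int \<delta>) ((x - y)\<^sup>2)"
      using power_add_sq_eq_odd by blast
    have "(\<Sum>j<2. (q powi (2 * \<tau>)) powi (1 - 2 * int j)) - 2 * (-1) powi \<tau>
        = (qint 2 q)\<^sup>2 * poly (map_poly of_int \<delta>) ((q - inverse q)\<^sup>2)"
      if q: "q \<noteq> 0" "q\<^sup>2 \<noteq> 1" for q :: real
    proof -
      have "(\<Sum>j<2. (q powi (2 * \<tau>)) powi (1 - 2 * int j)) - 2 * (-1) powi \<tau>
          = (q powi \<tau> + inverse (q powi \<tau>))\<^sup>2"
        using sum_eq[OF q(1)] False q(1) by (simp add: power2_sum)
      also have "\<dots> = (q ^ K + inverse q ^ K)\<^sup>2"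
        unfolding K_def by (cases q \<tau> rule: powi_abs_cases) (simp_all add: add.commute)
      also have "\<dots> = ((q - inverse q)\<^sup>2 + 4) * poly (map_poly of_int \<delta>) ((q - inverse q)\<^sup>2)"
        using \<delta>[of q "inverse q"] q(1) by simp
      also have "(q - inverse q)\<^sup>2 + 4 = (qint 2 q)\<^sup>2"
        using qint_sq_eq[OF q, of 2] by (simp add: qint_sq_poly_2 map_poly_pCons)
      finally show ?thesis .
    qed
    then show ?thesis
      by blast
  qed
qed

theorem lemma7p5:
  fixes p :: nat and \<tau> :: int
  assumes "prime p"
  shows "\<exists>\<alpha> :: int poly. \<forall>q :: real. q \<noteq> 0 \<and> q\<^sup>2 \<noteq> 1 \<longrightarrow>
    (\<Sum>j<p. (q powi (int p * \<tau>)) powi (int p - 1 - 2 * int j))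
      - real p * (-1) powi ((int p - 1) * \<tau>)
    = (qint (int p) q)\<^sup>2 * poly (map_poly of_int \<alpha>) ((q - inverse q)\<^sup>2)"
proof (cases "p = 2")
  case True
  moreover have "int p - 1 = 1"
    by (simp add: True)
  ultimately show ?thesis
    using quantum_sum_divisible_two[of \<tau>] by (simp only: of_nat_numeral mult_1)
next
  case False
  then have "odd p"
    using prime_ge_2_nat[OF assms] prime_odd_nat[OF assms] by simp
  then show ?thesis
    by (rule quantum_sum_divisible_odd)
qed

end
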